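(* Let $F:(0,\infty)\to\mathbb{R}$ be convex and continuously differentiable with $F(1)=0$, $\lim_{x\to0^+}F(x)<\infty$ and $\lim_{x\to\infty}F'(x)<\infty$. Let $P,Q$ and $P_i,Q_i$ ($i\in\mathbb{N}$) be probability measures on a common measurable space, all mutually absolutely continuous, such that $P_i\xrightarrow{\mathcal{M}}P$ and $Q_i\xrightarrow{\mathcal{M}}Q$. Then $D(P_i,Q_i)\to D(P,Q)$ as $i\to\infty$, where $D(P,Q)=\mathbf{E}_{\boldsymbol{x}\sim P}\big[F\big(\tfrac{dQ}{dP}(\boldsymbol{x})\big)\big]$.
   Context: $P_i\xrightarrow{\mathcal{M}}P$ means: for all $\epsilon>0$ and $\delta>0$ there is $i_0$ such that for all $i\ge i_0$, $\mathbf{P}_{\boldsymbol{x}\sim P}\big(1-\epsilon\le\frac{dP_i}{dP}(\boldsymbol{x})\le1+\epsilon\big)\ge1-\delta$. *)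

theory Defs
  imports "HOL-Probability.Probability"
begin

text \<open>Radon-Nikodym derivative dN/dM as a real-valued function.\<close>
definition rn :: "'a measure \<Rightarrow> 'a measure \<Rightarrow> 'a \<Rightarrow> real" where
  "rn M N x = enn2real (RN_deriv M N x)"

definition M_conv :: "(nat \<Rightarrow> 'a measure) \<Rightarrow> 'a measure \<Rightarrow> bool" where
  "M_conv Ps P \<longleftrightarrow>
     (\<forall>\<epsilon>>0. \<forall>\<delta>>0. \<exists>i0. \<forall>i\<ge>i0.
        measure P {x \<in> space P. 1 - \<epsilon> \<le> rn P (Ps i) x \<and> rn P (Ps i) x \<le> 1 + \<epsilon>} \<ge> 1 - \<delta>)"

definition fdiv :: "(real \<Rightarrow> real) \<Rightarrow> 'a measure \<Rightarrow> 'a measure \<Rightarrow> real" where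
  "fdiv F P Q = (\<integral>x. F (rn P Q x) \<partial>P)"

end

theory Submission
  imports Defs
begin

(* Write p = dP_i/dP, s = dQ_i/dQ and r = dQ/dP. By the chain rule dQ_i/dP_i = s r / p, so
   D(P_i, Q_i) = \<integral> p F(s r / p) dP, to be compared with D(P, Q) = \<integral> F(r) dP.
   Convexity together with the finite limits of F at 0 and of F' at infinity gives linear growth:
   |F x| \<le> a + b x and |x F'(x)| \<le> a + b x. Where p and s are \<epsilon>-close to 1, the tangents of F at
   r and at s r / p bound the difference of the integrands by O(\<epsilon> (1 + r)); on the complement B
   both integrands are at most a p + b s r + a + b r, whose integral a P_i(B) + b Q_i(B) + a P(B) + b Q(B)
   is at most (a + b) \<epsilon> + 2 a P(B) + 2 b Q(B). Finally P(B) and Q(B) tend to 0 by M-convergence,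
   because equivalent finite measures are uniformly absolutely continuous with respect to each other. *)

definition pos_subgradient :: "(real \<Rightarrow> real) \<Rightarrow> (real \<Rightarrow> real) \<Rightarrow> bool" where
  "pos_subgradient F F' \<longleftrightarrow> (\<forall>x>0. \<forall>y>0. F' x * (y - x) \<le> F y - F x)"

lemma pos_subgradientD:
  "pos_subgradient F F' \<Longrightarrow> x > 0 \<Longrightarrow> y > 0 \<Longrightarrow> F' x * (y - x) \<le> F y - F x"
  unfolding pos_subgradient_def by blast

lemma convex_on_pos_subgradient_deriv:
  fixes F :: "real \<Rightarrow> real"
  assumes convex: "convex_on {0<..} F" and diff: "\<forall>x>0. F differentiable (at x)"
  shows "pos_subgradient F (deriv F)"
  unfolding pos_subgradient_def
proof (intro allI impI)
  fix x y :: real assume "x > 0" "y > 0"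
  show "deriv F x * (y - x) \<le> F y - F x"
  proof (rule convex_on_imp_above_tangent[OF convex])
    show "connected {0::real<..}" by (simp add: convex_connected)
    show "x \<in> interior {0<..}" "y \<in> {0<..}" using \<open>x > 0\<close> \<open>y > 0\<close> by (simp_all add: interior_open)
    show "(F has_real_derivative deriv F x) (at x within {0<..})"
      using diff \<open>x > 0\<close> DERIV_deriv_iff_real_differentiable has_field_derivative_at_within by blast
  qed
qed

lemma subgradient_mono:
  fixes F F' :: "real \<Rightarrow> real"
  assumes subgrad: "pos_subgradient F F'"
    and "0 < x" "x < y"
  shows "F' x \<le> F' y"
proof -
  have "F' x * (y - x) \<le> F' y * (y - x)"
    using pos_subgradientD[OF subgrad, of x y] pos_subgradientD[OF subgrad, of y x] assms(2,3) by (simp add: algebra_simps)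
  then show ?thesis using assms(3) by simp
qed

lemma subgradient_le_lim_at_top:
  fixes F F' :: "real \<Rightarrow> real"
  assumes subgrad: "pos_subgradient F F'"
    and L: "(F' \<longlongrightarrow> L) at_top" and "x > 0"
  shows "F' x \<le> L"
proof (rule tendsto_lowerbound[OF L])
  show "\<forall>\<^sub>F y in at_top. F' x \<le> F' y"
    using eventually_gt_at_top[of x]
    by eventually_elim (use subgradient_mono[OF subgrad] \<open>x > 0\<close> in auto)
qed simp

lemma le_lim_at_right_0_plus_subgradient:
  fixes F F' :: "real \<Rightarrow> real"
  assumes subgrad: "pos_subgradient F F'"
    and l: "(F \<longlongrightarrow> l) (at_right 0)" and "x > 0"
  shows "F x \<le> l + x * F' x"
proof -
  have "((\<lambda>y. F y - F' x * (y - x)) \<longlongrightarrow> l - F' x * (0 - x)) (at_right 0)"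
    by (intro tendsto_intros l)
  moreover have "\<forall>\<^sub>F y in at_right 0. F x \<le> F y - F' x * (y - x)"
    using eventually_at_right_less[of "0::real"]
    by eventually_elim (use pos_subgradientD[OF subgrad] \<open>x > 0\<close> in force)
  ultimately show ?thesis
    by (intro tendsto_lowerbound[where F = "at_right 0"]) (auto simp: algebra_simps)
qed

lemma subgradient_linear_growth:
  fixes F F' :: "real \<Rightarrow> real"
  assumes subgrad: "pos_subgradient F F'"
    and F1: "F 1 = 0" and l: "(F \<longlongrightarrow> l) (at_right 0)" and L: "(F' \<longlongrightarrow> L) at_top"
  obtains a b where "a \<ge> 0" "b \<ge> 0"
    "\<And>x. x > 0 \<Longrightarrow> \<bar>F x\<bar> \<le> a + b * x" "\<And>x. x > 0 \<Longrightarrow> \<bar>x * F' x\<bar> \<le> a + b * x"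
proof
  show "\<bar>F x\<bar> \<le> \<bar>l\<bar> + \<bar>F' 1\<bar> + (\<bar>L\<bar> + \<bar>F' 1\<bar>) * x"
    and "\<bar>x * F' x\<bar> \<le> \<bar>l\<bar> + \<bar>F' 1\<bar> + (\<bar>L\<bar> + \<bar>F' 1\<bar>) * x" if x: "x > 0" for x
  proof -
    have "F' 1 * (x - 1) \<le> F x" using pos_subgradientD[OF subgrad, of 1 x] x F1 by simp
    moreover have "- \<bar>F' 1\<bar> * (x + 1) \<le> F' 1 * (x - 1)"
      using x by (cases "F' 1 \<ge> 0") (auto simp: algebra_simps)
    moreover have "x * F' x \<le> \<bar>L\<bar> * x"
      using subgradient_le_lim_at_top[OF subgrad L x] x by (simp add: mult.commute mult_left_mono)
    moreover have "(\<bar>L\<bar> + \<bar>F' 1\<bar>) * x = \<bar>L\<bar> * x + \<bar>F' 1\<bar> * x"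
      and "\<bar>F' 1\<bar> * (x + 1) = \<bar>F' 1\<bar> * x + \<bar>F' 1\<bar>"
      by (simp_all add: algebra_simps)
    moreover have "0 \<le> \<bar>F' 1\<bar> * x" "0 \<le> \<bar>L\<bar> * x" using x by simp_all
    ultimately show "\<bar>F x\<bar> \<le> \<bar>l\<bar> + \<bar>F' 1\<bar> + (\<bar>L\<bar> + \<bar>F' 1\<bar>) * x"
      and "\<bar>x * F' x\<bar> \<le> \<bar>l\<bar> + \<bar>F' 1\<bar> + (\<bar>L\<bar> + \<bar>F' 1\<bar>) * x"
      using le_lim_at_right_0_plus_subgradient[OF subgrad l x] by argo+
  qed
qed simp_all

lemma perspective_abs_le:
  fixes F :: "real \<Rightarrow> real"
  assumes growth: "\<And>x. x > 0 \<Longrightarrow> \<bar>F x\<bar> \<le> a + b * x" and "p > 0" "q > 0"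
  shows "\<bar>p * F (q / p)\<bar> \<le> a * p + b * q"
proof -
  have "\<bar>p * F (q / p)\<bar> = p * \<bar>F (q / p)\<bar>" using \<open>p > 0\<close> by (simp add: abs_mult)
  also have "\<dots> \<le> p * (a + b * (q / p))" using assms by (intro mult_left_mono growth) auto
  also have "\<dots> = a * p + b * q" using \<open>p > 0\<close> by (simp add: field_simps)
  finally show ?thesis .
qed

lemma subgradient_abs_diff_le:
  fixes F F' :: "real \<Rightarrow> real"
  assumes subgrad: "pos_subgradient F F'"
    and slope: "\<And>x. x > 0 \<Longrightarrow> \<bar>x * F' x\<bar> \<le> a + b * x" and "b \<ge> 0" "c \<ge> 0"
    and "x > 0" "y > 0" "\<bar>y - x\<bar> \<le> c * x" "\<bar>y - x\<bar> \<le> c * y"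
  shows "\<bar>F y - F x\<bar> \<le> c * (a + b * x + b * y)"
proof -
  have tangent: "\<bar>F' z * (y - x)\<bar> \<le> c * (a + b * z)" if "z > 0" "\<bar>y - x\<bar> \<le> c * z" for z
  proof -
    have "\<bar>F' z * (y - x)\<bar> \<le> \<bar>F' z\<bar> * (c * z)"
      unfolding abs_mult using that(2) by (rule mult_left_mono) simp
    also have "\<dots> = c * \<bar>z * F' z\<bar>" using that(1) \<open>c \<ge> 0\<close> by (simp add: abs_mult)
    also have "\<dots> \<le> c * (a + b * z)" using slope[OF that(1)] \<open>c \<ge> 0\<close> by (rule mult_left_mono)
    finally show ?thesis .
  qed
  have "F' x * (y - x) \<le> F y - F x" "F y - F x \<le> F' y * (y - x)"
    using pos_subgradientD[OF subgrad, of x y] pos_subgradientD[OF subgrad, of y x] assms(5,6) by (auto simp: algebra_simps)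
  moreover have "0 \<le> c * (b * x)" "0 \<le> c * (b * y)" using assms(3-6) by simp_all
  ultimately show ?thesis
    using tangent[of x] tangent[of y] assms(5-8) by (simp add: algebra_simps abs_le_iff)
qed

lemma perspective_deviation_le:
  fixes F F' :: "real \<Rightarrow> real"
  assumes subgrad: "pos_subgradient F F'"
    and growth: "\<And>x. x > 0 \<Longrightarrow> \<bar>F x\<bar> \<le> a + b * x" "\<And>x. x > 0 \<Longrightarrow> \<bar>x * F' x\<bar> \<le> a + b * x"
    and "a \<ge> 0" "b \<ge> 0" "r > 0" "0 \<le> e" "e \<le> 1/2"
    and p: "\<bar>p - 1\<bar> \<le> e" and s: "\<bar>s - 1\<bar> \<le> e"
  shows "\<bar>p * F (s * r / p) - F r\<bar> \<le> e * (13 * a + 51 * b) * (1 + r)"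
proof -
  define t where "t = s * r / p"
  have "p \<ge> 1/2" "s > 0" using p s \<open>e \<le> 1/2\<close> by auto
  then have "t > 0" using \<open>r > 0\<close> by (simp add: t_def)
  have t_le: "t \<le> 3 * r" and r_le: "r \<le> 3 * t"
    using \<open>p \<ge> 1/2\<close> p s \<open>e \<le> 1/2\<close> \<open>r > 0\<close> by (auto simp: t_def field_simps)
  have "t - r = r * (s - p) / p" using \<open>p \<ge> 1/2\<close> by (simp add: t_def field_simps)
  then have "\<bar>t - r\<bar> = r * \<bar>s - p\<bar> / p" using \<open>p \<ge> 1/2\<close> \<open>r > 0\<close> by (simp add: abs_mult)
  also have "\<dots> \<le> r * (2 * e) / (1/2)"
    using \<open>p \<ge> 1/2\<close> \<open>r > 0\<close> p s \<open>e \<ge> 0\<close> by (intro frac_le mult_left_mono) auto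
  finally have "\<bar>t - r\<bar> \<le> 4 * e * r" by (simp add: mult_ac)
  moreover have "4 * e * r \<le> 4 * e * (3 * t)" "4 * e * r \<le> 4 * e * (3 * r)"
    using r_le \<open>e \<ge> 0\<close> \<open>r > 0\<close> by (intro mult_left_mono; simp)+
  ultimately have "\<bar>F t - F r\<bar> \<le> (12 * e) * (a + b * r + b * t)"
    using \<open>t > 0\<close> \<open>r > 0\<close> \<open>e \<ge> 0\<close>
    by (intro subgradient_abs_diff_le[OF subgrad growth(2) \<open>b \<ge> 0\<close>]) auto
  also have "\<dots> \<le> 12 * e * (a + 4 * b * r)"
    using mult_left_mono[OF t_le \<open>b \<ge> 0\<close>] \<open>e \<ge> 0\<close> by (intro mult_left_mono) auto
  finally have tangents: "\<bar>F t - F r\<bar> \<le> 12 * e * (a + 4 * b * r)" .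
  have "\<bar>(p - 1) * F t\<bar> \<le> e * (a + b * t)"
    using growth(1)[OF \<open>t > 0\<close>] p by (simp add: abs_mult mult_mono)
  also have "\<dots> \<le> e * (a + 3 * b * r)"
    using mult_left_mono[OF t_le \<open>b \<ge> 0\<close>] \<open>e \<ge> 0\<close> by (intro mult_left_mono) auto
  finally have weight: "\<bar>(p - 1) * F t\<bar> \<le> e * (a + 3 * b * r)" .
  have "p * F t - F r = (p - 1) * F t + (F t - F r)" by (simp add: algebra_simps)
  then have "\<bar>p * F t - F r\<bar> \<le> e * (a + 3 * b * r) + 12 * e * (a + 4 * b * r)"
    using tangents weight by argo
  also have "\<dots> \<le> e * (13 * a + 51 * b) * (1 + r)"
    using assms by (simp add: algebra_simps)
  finally show ?thesis unfolding t_def .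
qed

lemma borel_measurable_continuous_on_pos_comp:
  fixes F :: "real \<Rightarrow> real"
  assumes F: "continuous_on {0<..} F" and g: "g \<in> borel_measurable M" and nonneg: "\<And>x. g x \<ge> 0"
  shows "(\<lambda>x. F (g x)) \<in> borel_measurable M"
proof -
  let ?G = "\<lambda>y::real. if y \<in> {0<..} then F y else F 0"
  have "?G \<in> borel_measurable borel"
    by (rule borel_measurable_continuous_on_if) (auto intro: F)
  with g have "(\<lambda>x. ?G (g x)) \<in> borel_measurable M" by measurable
  moreover have "?G (g x) = F (g x)" for x using nonneg[of x] by auto
  ultimately show ?thesis by simp
qed

lemma rn_measurable[measurable]: "rn M N \<in> borel_measurable M"
  unfolding rn_def by measurable

lemma rn_measurable_sets_eq: "sets M = sets K \<Longrightarrow> rn M N \<in> borel_measurable K"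
  using measurable_cong_sets[of M K borel borel] by simp

lemma rn_nonneg[simp]: "0 \<le> rn M N x"
  unfolding rn_def by simp

lemma rn_pos_AE:
  assumes "prob_space M" "prob_space N" "sets N = sets M"
    "absolutely_continuous M N" "absolutely_continuous N M"
  shows "AE x in M. rn M N x > 0"
proof -
  interpret M: prob_space M by fact
  interpret N: prob_space N by fact
  obtain D where D: "AE x in M. RN_deriv M N x = ennreal (D x)" "AE x in N. 0 < D x" "\<And>x. 0 \<le> D x"
    using M.real_RN_deriv[OF _ assms(4,3)] N.finite_measure_axioms by metis
  have "AE x in M. 0 < D x"
    by (rule absolutely_continuous_AE[OF assms(3)[symmetric] assms(5) D(2)])
  with D(1) show ?thesis
    by eventually_elim (simp add: rn_def D(3))
qed

lemma rn_chain_AE: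
  assumes "prob_space M" "prob_space N" "prob_space K" "sets N = sets M" "sets K = sets M"
    "absolutely_continuous M N" "absolutely_continuous N K"
  shows "AE x in M. rn M N x * rn N K x = rn M K x"
proof -
  interpret M: prob_space M by fact
  interpret N: prob_space N by fact
  have RN_NK: "RN_deriv N K \<in> borel_measurable M"
    using measurable_cong_sets[OF assms(4) refl] borel_measurable_RN_deriv[of N K] by metis
  have "density M (\<lambda>x. RN_deriv M N x * RN_deriv N K x) = density (density M (RN_deriv M N)) (RN_deriv N K)"
    by (rule density_density_eq[symmetric, OF borel_measurable_RN_deriv RN_NK])
  also have "\<dots> = K"
    using assms(4,5) by (simp add: M.density_RN_deriv[OF assms(6,4)] N.density_RN_deriv[OF assms(7)])
  finally have "AE x in M. RN_deriv M N x * RN_deriv N K x = RN_deriv M K x"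
    using RN_NK by (intro M.RN_deriv_unique) auto
  then show ?thesis unfolding rn_def by eventually_elim (simp flip: enn2real_mult)
qed

lemma
  assumes "prob_space M" "prob_space N" "sets N = sets M" "absolutely_continuous M N"
    and f: "f \<in> borel_measurable M"
  shows rn_integral: "integral\<^sup>L N f = (\<integral>x. rn M N x * f x \<partial>M)"
    and integrable_iff_rn: "integrable N f \<longleftrightarrow> integrable M (\<lambda>x. rn M N x * f x)"
proof -
  interpret M: prob_space M by fact
  interpret N: prob_space N by fact
  show "integral\<^sup>L N f = (\<integral>x. rn M N x * f x \<partial>M)"
    "integrable N f \<longleftrightarrow> integrable M (\<lambda>x. rn M N x * f x)"
    using M.RN_deriv_integral[OF _ assms(4,3) f] M.RN_deriv_integrable[OF _ assms(4,3) f]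
      N.sigma_finite_measure_axioms unfolding rn_def by auto
qed

lemma integrable_rn:
  assumes "prob_space M" "prob_space N" "sets N = sets M" "absolutely_continuous M N"
  shows "integrable M (rn M N)"
proof -
  interpret N: prob_space N by fact
  show ?thesis using integrable_iff_rn[OF assms, of "\<lambda>_. 1"] by simp
qed

lemma measure_eq_integral_rn:
  assumes "prob_space M" "prob_space N" "sets N = sets M" "absolutely_continuous M N"
    and A: "A \<in> sets M"
  shows "measure N A = (\<integral>x. rn M N x * indicator A x \<partial>M)"
proof -
  have "measure N A = integral\<^sup>L N (indicator A)"
    using A assms(3) sets.sets_into_space[of A N] by (simp add: Int_absorb2)
  also have "\<dots> = (\<integral>x. rn M N x * indicator A x \<partial>M)"
    using A by (intro rn_integral[OF assms(1-4)]) auto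
  finally show ?thesis .
qed

lemma measure_rn_greater_tendsto_0:
  assumes "prob_space N" "sets N = sets M"
  shows "(\<lambda>n::nat. measure N {x \<in> space M. real n < rn M N x}) \<longlonglongrightarrow> 0"
proof -
  interpret N: prob_space N by fact
  define S where "S n = {x \<in> space M. real n < rn M N x}" for n :: nat
  have "S n \<in> sets N" for n unfolding S_def using assms(2) by measurable
  then have "(\<lambda>n. measure N (S n)) \<longlonglongrightarrow> measure N (\<Inter>n. S n)"
    by (intro Lim_measure_decseq) (auto simp: decseq_def S_def)
  moreover have "x \<notin> S (nat \<lceil>rn M N x\<rceil>)" for x by (simp add: S_def not_less)
  then have "(\<Inter>n. S n) = {}" by blast
  ultimately show ?thesis by (simp add: S_def)
qed

lemma absolutely_continuous_uniform:
  assumes "prob_space M" "prob_space N" "sets N = sets M" "absolutely_continuous M N" "e > 0"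
  obtains d where "d > 0" "\<And>A. A \<in> sets M \<Longrightarrow> measure M A < d \<Longrightarrow> measure N A < e"
proof -
  interpret M: prob_space M by fact
  interpret N: prob_space N by fact
  define S where "S n = {x \<in> space M. real n < rn M N x}" for n :: nat
  obtain n where n: "measure N (S n) < e/2"
    using order_tendstoD(2)[OF measure_rn_greater_tendsto_0[OF assms(2,3)], of "e/2"] assms(5)
    by (auto simp: S_def eventually_sequentially)
  have S: "S n \<in> sets M" unfolding S_def by measurable
  \<comment> \<open>Outside \<open>S n\<close> the density is at most \<open>n\<close>, so there \<open>N \<le> n \<cdot> M\<close>.\<close>
  show ?thesis
  proof
    show "e / (2 * (real n + 1)) > 0" using assms(5) by simp
    fix A assume A: "A \<in> sets M" and small: "measure M A < e / (2 * (real n + 1))"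
    define B where "B = A - S n"
    have B: "B \<in> sets M" unfolding B_def using A S by auto
    have "measure N A \<le> measure N (S n \<union> B)"
      using A B S assms(3) by (intro N.finite_measure_mono) (auto simp: B_def)
    also have "\<dots> \<le> measure N (S n) + measure N B"
      using B S assms(3) by (intro measure_Un_le) auto
    also have "measure N B = (\<integral>x. rn M N x * indicator B x \<partial>M)"
      by (rule measure_eq_integral_rn[OF assms(1-4) B])
    also have "\<dots> \<le> (\<integral>x. real n * indicator B x \<partial>M)"
      using B integrable_rn[OF assms(1-4)]
      by (intro integral_mono integrable_real_mult_indicator)
        (auto simp: B_def S_def split: split_indicator)
    also have "\<dots> = real n * measure M B"
      using B sets.sets_into_space[OF B] by (simp add: Int_absorb2)
    also have "\<dots> \<le> real n * (e / (2 * (real n + 1)))"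
      using small M.finite_measure_mono[of B A] A by (intro mult_left_mono) (auto simp: B_def)
    also have "\<dots> \<le> e / 2"
      using assms(5) by (simp add: field_simps)
    finally show "measure N A < e" using n by linarith
  qed
qed

definition rn_close_set :: "'a measure \<Rightarrow> 'a measure \<Rightarrow> real \<Rightarrow> 'a set" where
  "rn_close_set M N \<epsilon> = {x \<in> space M. 1 - \<epsilon> \<le> rn M N x \<and> rn M N x \<le> 1 + \<epsilon>}"

lemma rn_close_set_sets[measurable]: "rn_close_set M N \<epsilon> \<in> sets M"
  unfolding rn_close_set_def by measurable

lemma M_conv_iff_rn_close_set:
  "M_conv Ps P \<longleftrightarrow> (\<forall>\<epsilon>>0. \<forall>\<delta>>0. \<exists>i0. \<forall>i\<ge>i0. measure P (rn_close_set P (Ps i) \<epsilon>) \<ge> 1 - \<delta>)"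
  unfolding M_conv_def rn_close_set_def ..

lemma measure_compl_le_if_rn_ge:
  assumes "prob_space M" "prob_space N" "sets N = sets M" "absolutely_continuous M N"
    and G: "G \<in> sets M" "\<And>x. x \<in> G \<Longrightarrow> 1 - \<epsilon> \<le> rn M N x" and "\<epsilon> \<ge> 0"
  shows "measure N (space M - G) \<le> \<epsilon> + measure M (space M - G)"
proof -
  interpret M: prob_space M by fact
  interpret N: prob_space N by fact
  have "(1 - \<epsilon>) * measure M G = (\<integral>x. (1 - \<epsilon>) * indicator G x \<partial>M)"
    using G sets.sets_into_space[OF G(1)] by (simp add: Int_absorb2)
  also have "\<dots> \<le> (\<integral>x. rn M N x * indicator G x \<partial>M)"
    using G integrable_rn[OF assms(1-4)]
    by (intro integral_mono integrable_real_mult_indicator) (auto split: split_indicator)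
  also have "\<dots> = measure N G" by (rule measure_eq_integral_rn[OF assms(1-4) G(1), symmetric])
  finally have "(1 - \<epsilon>) * measure M G \<le> measure N G" .
  moreover have "measure N (space M - G) = 1 - measure N G"
    using N.prob_compl[of G] G assms(3) sets_eq_imp_space_eq[OF assms(3)] by simp
  moreover have "measure M (space M - G) = 1 - measure M G" using M.prob_compl G by simp
  moreover have "\<epsilon> * measure M G \<le> \<epsilon>" using \<open>\<epsilon> \<ge> 0\<close> by (simp add: mult_left_le)
  ultimately show ?thesis by (simp add: algebra_simps)
qed

lemma M_conv_measure_compl_tendsto_0:
  assumes conv: "M_conv Ps P"
    and "prob_space P" "prob_space N" "sets N = sets P" "absolutely_continuous P N" "\<epsilon> > 0"
  shows "(\<lambda>i. measure N (space P - rn_close_set P (Ps i) \<epsilon>)) \<longlonglongrightarrow> 0"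
proof (rule LIMSEQ_I)
  interpret P: prob_space P by fact
  fix \<theta> :: real assume "\<theta> > 0"
  then obtain d where "d > 0" and d: "\<And>A. A \<in> sets P \<Longrightarrow> measure P A < d \<Longrightarrow> measure N A < \<theta>"
    using absolutely_continuous_uniform[OF assms(2-5)] by blast
  then obtain i0 where "\<forall>i\<ge>i0. measure P (rn_close_set P (Ps i) \<epsilon>) \<ge> 1 - d/2"
    using conv \<open>\<epsilon> > 0\<close> unfolding M_conv_iff_rn_close_set by (meson half_gt_zero)
  then have "measure N (space P - rn_close_set P (Ps i) \<epsilon>) < \<theta>" if "i \<ge> i0" for i
    using that \<open>d > 0\<close> by (intro d) (auto simp: P.prob_compl)
  then show "\<exists>i0. \<forall>i\<ge>i0. norm (measure N (space P - rn_close_set P (Ps i) \<epsilon>) - 0) < \<theta>"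
    by auto
qed

lemma fdiv_eq_perspective_integral:
  assumes F: "continuous_on {0<..} F"
    and "prob_space P" "prob_space P'" "prob_space Q'" "sets P' = sets P" "sets Q' = sets P"
    and "absolutely_continuous P P'" "absolutely_continuous P' P" "absolutely_continuous P' Q'"
  shows "fdiv F P' Q' = (\<integral>x. rn P P' x * F (rn P Q' x / rn P P' x) \<partial>P)"
proof -
  have F_rn: "(\<lambda>x. F (rn P' Q' x)) \<in> borel_measurable P"
    using assms(5) by (intro borel_measurable_continuous_on_pos_comp[OF F] rn_measurable_sets_eq) auto
  have "fdiv F P' Q' = (\<integral>x. rn P P' x * F (rn P' Q' x) \<partial>P)"
    unfolding fdiv_def by (rule rn_integral[OF assms(2,3,5,7) F_rn])
  also have "\<dots> = (\<integral>x. rn P P' x * F (rn P Q' x / rn P P' x) \<partial>P)"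
  proof (rule integral_cong_AE)
    show "AE x in P. rn P P' x * F (rn P' Q' x) = rn P P' x * F (rn P Q' x / rn P P' x)"
      using rn_pos_AE[OF assms(2,3,5,7,8)] rn_chain_AE[OF assms(2-6,7,9)]
      by eventually_elim (metis less_irrefl nonzero_mult_div_cancel_left)
    show "(\<lambda>x. rn P P' x * F (rn P Q' x / rn P P' x)) \<in> borel_measurable P"
      by (intro borel_measurable_times borel_measurable_continuous_on_pos_comp[OF F]) auto
  qed (use F_rn in simp)
  finally show ?thesis .
qed

lemma integral_dist_le_AE:
  fixes f g h :: "'a \<Rightarrow> real"
  assumes "f \<in> borel_measurable M" "integrable M g" "integrable M h"
    and bound: "AE x in M. \<bar>f x - g x\<bar> \<le> h x"
  shows "\<bar>integral\<^sup>L M f - integral\<^sup>L M g\<bar> \<le> integral\<^sup>L M h"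
proof -
  have "integrable M (\<lambda>x. f x - g x)"
  proof (rule Bochner_Integration.integrable_bound[OF assms(3)])
    show "AE x in M. norm (f x - g x) \<le> norm (h x)"
      using bound by eventually_elim auto
  qed (use assms in auto)
  from Bochner_Integration.integrable_add[OF this assms(2)] have "integrable M f" by simp
  then have "\<bar>integral\<^sup>L M f - integral\<^sup>L M g\<bar> = \<bar>\<integral>x. f x - g x \<partial>M\<bar>"
    using assms(2) by simp
  also have "\<dots> \<le> (\<integral>x. \<bar>f x - g x\<bar> \<partial>M)"
    using integral_norm_bound[of M "\<lambda>x. f x - g x"] by simp
  also have "\<dots> \<le> integral\<^sup>L M h"
    using assms(3) bound by (intro integral_mono_AE') auto
  finally show ?thesis .
qed

lemma has_bochner_integral_rn:
  assumes "prob_space M" "prob_space N" "sets N = sets M" "absolutely_continuous M N"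
  shows "has_bochner_integral M (rn M N) 1"
proof -
  interpret N: prob_space N by fact
  show ?thesis
    using rn_integral[OF assms, of "\<lambda>_. 1"] integrable_rn[OF assms]
    by (simp add: has_bochner_integral_iff N.prob_space)
qed

lemma has_bochner_integral_rn_indicator:
  assumes "prob_space M" "prob_space N" "sets N = sets M" "absolutely_continuous M N" "A \<in> sets M"
  shows "has_bochner_integral M (\<lambda>x. rn M N x * indicator A x) (measure N A)"
  using measure_eq_integral_rn[OF assms] integrable_rn[OF assms(1-4)] assms(5)
  by (auto simp: has_bochner_integral_iff intro: integrable_real_mult_indicator)

locale equivalent_probs =
  fixes P Q P' Q' :: "'a measure"
  assumes prob: "\<forall>M\<in>{P, Q, P', Q'}. prob_space M \<and> sets M = sets P"
    and ac: "\<forall>M\<in>{P, Q, P', Q'}. \<forall>N\<in>{P, Q, P', Q'}. absolutely_continuous M N"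
begin

lemma probs: "prob_space P" "prob_space Q" "prob_space P'" "prob_space Q'"
  and sets: "sets Q = sets P" "sets P' = sets P" "sets Q' = sets P" "sets Q' = sets Q"
  and acs: "absolutely_continuous P Q" "absolutely_continuous Q P"
    "absolutely_continuous P P'" "absolutely_continuous P' P" "absolutely_continuous P Q'"
    "absolutely_continuous Q Q'" "absolutely_continuous Q' Q" "absolutely_continuous P' Q'"
    "absolutely_continuous P P" "absolutely_continuous Q Q"
  using prob ac by auto

sublocale P: prob_space P by (rule probs(1))

lemma space_Q: "space Q = space P"
  by (rule sets_eq_imp_space_eq[OF sets(1)])

lemma rn_AE: "AE x in P. rn P P' x > 0 \<and> rn Q Q' x > 0 \<and> rn P Q x > 0
    \<and> rn P Q' x = rn Q Q' x * rn P Q x"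
proof -
  have "AE x in P. rn Q Q' x > 0"
    using rn_pos_AE[OF probs(2,4) sets(4) acs(6,7)]
    by (rule absolutely_continuous_AE[OF sets(1)[symmetric] acs(2)])
  with rn_pos_AE[OF probs(1,3) sets(2) acs(3,4)] rn_pos_AE[OF probs(1,2) sets(1) acs(1,2)]
    rn_chain_AE[OF probs(1,2,4) sets(1,3) acs(1,6)]
  show ?thesis by eventually_elim (simp add: mult.commute)
qed

lemma integrable_linear_growth_comp_rn:
  fixes F :: "real \<Rightarrow> real"
  assumes "continuous_on {0<..} F" "\<And>x. x > 0 \<Longrightarrow> \<bar>F x\<bar> \<le> a + b * x" "a \<ge> 0" "b \<ge> 0"
  shows "integrable P (\<lambda>x. F (rn P Q x))"
proof (rule Bochner_Integration.integrable_bound)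
  show "integrable P (\<lambda>x. a + b * rn P Q x)"
    using integrable_rn[OF probs(1,2) sets(1) acs(1)] by simp
  show "AE x in P. norm (F (rn P Q x)) \<le> norm (a + b * rn P Q x)"
    using rn_AE by eventually_elim (use assms in force)
qed (use assms(1) in \<open>auto intro: borel_measurable_continuous_on_pos_comp\<close>)

lemma has_bochner_integral_dist_bound:
  assumes "B \<in> sets P"
  shows "has_bochner_integral P (\<lambda>x. c * (1 + rn P Q x) + a * (rn P P' x * indicator B x)
      + b * (rn P Q' x * indicator B x) + a * indicator B x + b * (rn P Q x * indicator B x))
    (c * 2 + a * measure P' B + b * measure Q' B + a * measure P B + b * measure Q B)"
proof -
  have "has_bochner_integral P (\<lambda>_. 1) (1::real)"
    by (simp add: has_bochner_integral_iff P.prob_space)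
  from has_bochner_integral_add[OF this has_bochner_integral_rn[OF probs(1,2) sets(1) acs(1)]]
  have "has_bochner_integral P (\<lambda>x. 1 + rn P Q x) 2" by simp
  then show ?thesis
    using has_bochner_integral_rn_indicator[OF probs(1,3) sets(2) acs(3) assms]
      has_bochner_integral_rn_indicator[OF probs(1,4) sets(3) acs(5) assms]
      has_bochner_integral_rn_indicator[OF probs(1,2) sets(1) acs(1) assms]
      has_bochner_integral_real_indicator[OF assms]
    by (intro has_bochner_integral_add has_bochner_integral_mult_right)
      (auto simp: P.emeasure_finite less_top[symmetric])
qed

lemma measure_compl_rn_close_sets_le:
  assumes "\<epsilon> \<ge> 0"
  defines "B \<equiv> space P - (rn_close_set P P' \<epsilon> \<inter> rn_close_set Q Q' \<epsilon>)"
  shows "measure P' B \<le> \<epsilon> + measure P B" and "measure Q' B \<le> \<epsilon> + measure Q B"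
proof -
  define G where "G = rn_close_set P P' \<epsilon> \<inter> rn_close_set Q Q' \<epsilon>"
  have G: "G \<in> sets P" "G \<in> sets Q"
    using rn_close_set_sets[of P P' \<epsilon>] rn_close_set_sets[of Q Q' \<epsilon>] sets(1)
    unfolding G_def by auto
  have close: "\<And>x. x \<in> G \<Longrightarrow> 1 - \<epsilon> \<le> rn P P' x" "\<And>x. x \<in> G \<Longrightarrow> 1 - \<epsilon> \<le> rn Q Q' x"
    by (auto simp: G_def rn_close_set_def)
  show "measure P' B \<le> \<epsilon> + measure P B"
    using measure_compl_le_if_rn_ge[OF probs(1,3) sets(2) acs(3) G(1) close(1) assms(1)]
    by (simp add: B_def G_def)
  show "measure Q' B \<le> \<epsilon> + measure Q B"
    using measure_compl_le_if_rn_ge[OF probs(2,4) sets(4) acs(6) G(2) close(2) assms(1)]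
    by (simp add: B_def G_def space_Q)
qed

lemma perspective_dist_AE:
  fixes F F' :: "real \<Rightarrow> real"
  assumes subgrad: "pos_subgradient F F'"
    and growth: "\<And>x. x > 0 \<Longrightarrow> \<bar>F x\<bar> \<le> a + b * x" "\<And>x. x > 0 \<Longrightarrow> \<bar>x * F' x\<bar> \<le> a + b * x"
    and ab: "a \<ge> 0" "b \<ge> 0" and eps: "0 \<le> \<epsilon>" "\<epsilon> \<le> 1/2"
  defines "B \<equiv> space P - (rn_close_set P P' \<epsilon> \<inter> rn_close_set Q Q' \<epsilon>)"
  shows "AE x in P. \<bar>rn P P' x * F (rn P Q' x / rn P P' x) - F (rn P Q x)\<bar>
    \<le> \<epsilon> * (13 * a + 51 * b) * (1 + rn P Q x) + a * (rn P P' x * indicator B x)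
      + b * (rn P Q' x * indicator B x) + a * indicator B x + b * (rn P Q x * indicator B x)"
  using rn_AE AE_space
proof eventually_elim
  case (elim x)
  have "0 \<le> \<epsilon> * (13 * a + 51 * b) * (1 + rn P Q x)" using eps ab by simp
  moreover have "\<bar>rn P P' x * F (rn P Q' x / rn P P' x)\<bar> \<le> a * rn P P' x + b * rn P Q' x"
    using elim by (intro perspective_abs_le growth) auto
  moreover have "\<bar>F (rn P Q x)\<bar> \<le> a + b * rn P Q x" using elim growth by auto
  moreover have "\<bar>rn P P' x * F (rn Q Q' x * rn P Q x / rn P P' x) - F (rn P Q x)\<bar>
      \<le> \<epsilon> * (13 * a + 51 * b) * (1 + rn P Q x)" if "x \<notin> B"
    using elim that eps space_Q
    by (intro perspective_deviation_le[OF subgrad growth ab])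
      (auto simp: B_def rn_close_set_def abs_le_iff)
  ultimately show ?case
    using elim by (cases "x \<in> B") auto
qed

lemma fdiv_dist_le:
  fixes F F' :: "real \<Rightarrow> real"
  assumes F_cont: "continuous_on {0<..} F"
    and subgrad: "pos_subgradient F F'"
    and growth: "\<And>x. x > 0 \<Longrightarrow> \<bar>F x\<bar> \<le> a + b * x" "\<And>x. x > 0 \<Longrightarrow> \<bar>x * F' x\<bar> \<le> a + b * x"
    and ab: "a \<ge> 0" "b \<ge> 0" and eps: "0 \<le> \<epsilon>" "\<epsilon> \<le> 1/2"
  defines "B \<equiv> space P - (rn_close_set P P' \<epsilon> \<inter> rn_close_set Q Q' \<epsilon>)"
  shows "\<bar>fdiv F P' Q' - fdiv F P Q\<bar>
    \<le> \<epsilon> * (27 * a + 103 * b) + 2 * a * measure P B + 2 * b * measure Q B"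
proof -
  have "B \<in> sets P"
    using rn_close_set_sets[of P P' \<epsilon>] rn_close_set_sets[of Q Q' \<epsilon>] sets(1) by (auto simp: B_def)
  note bound = has_bochner_integral_dist_bound[OF this, of "\<epsilon> * (13 * a + 51 * b)" a b]
  have "\<bar>fdiv F P' Q' - fdiv F P Q\<bar>
      \<le> \<epsilon> * (13 * a + 51 * b) * 2 + a * measure P' B + b * measure Q' B + a * measure P B + b * measure Q B"
    unfolding fdiv_eq_perspective_integral[OF F_cont probs(1,3,4) sets(2,3) acs(3,4,8)]
      fdiv_def[of F P Q] has_bochner_integral_integral_eq[OF bound, symmetric]
  proof (rule integral_dist_le_AE)
    show "(\<lambda>x. rn P P' x * F (rn P Q' x / rn P P' x)) \<in> borel_measurable P"
      by (intro borel_measurable_times borel_measurable_continuous_on_pos_comp[OF F_cont]) auto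
  qed (use integrable.intros[OF bound] integrable_linear_growth_comp_rn[OF F_cont growth(1) ab]
      perspective_dist_AE[OF subgrad growth ab eps] in \<open>simp_all add: B_def\<close>)
  also have "\<dots> \<le> \<epsilon> * (27 * a + 103 * b) + 2 * a * measure P B + 2 * b * measure Q B"
    using mult_left_mono[OF measure_compl_rn_close_sets_le(1)[OF eps(1)] ab(1)]
      mult_left_mono[OF measure_compl_rn_close_sets_le(2)[OF eps(1)] ab(2)]
    by (simp add: B_def algebra_simps)
  finally show ?thesis .
qed

end

lemma M_conv_measure_compl_inter_tendsto_0:
  assumes "M_conv Ps P" "M_conv Qs Q" "prob_space P" "prob_space Q" "prob_space N"
    and "sets Q = sets P" "sets N = sets P" "absolutely_continuous P N" "absolutely_continuous Q N"
    and "\<epsilon> > 0"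
  shows "(\<lambda>i. measure N (space P - (rn_close_set P (Ps i) \<epsilon> \<inter> rn_close_set Q (Qs i) \<epsilon>))) \<longlonglongrightarrow> 0"
proof -
  interpret N: prob_space N by fact
  have space: "space Q = space P"
    using sets_eq_imp_space_eq[OF assms(6)] .
  have union_bound_tendsto: "(\<lambda>i. measure N (space P - rn_close_set P (Ps i) \<epsilon>)
      + measure N (space Q - rn_close_set Q (Qs i) \<epsilon>)) \<longlonglongrightarrow> 0"
    using assms(6,7)
    by (intro tendsto_add_zero M_conv_measure_compl_tendsto_0[OF assms(1,3,5,7,8,10)]
        M_conv_measure_compl_tendsto_0[OF assms(2,4,5) _ assms(9,10)]) simp
  have union_bound: "measure N (space P - (rn_close_set P (Ps i) \<epsilon> \<inter> rn_close_set Q (Qs i) \<epsilon>))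
      \<le> measure N (space P - rn_close_set P (Ps i) \<epsilon>) + measure N (space Q - rn_close_set Q (Qs i) \<epsilon>)"
    for i
  proof -
    have "space P - rn_close_set P (Ps i) \<epsilon> \<in> sets N" "space P - rn_close_set Q (Qs i) \<epsilon> \<in> sets N"
      using rn_close_set_sets[of P "Ps i" \<epsilon>] rn_close_set_sets[of Q "Qs i" \<epsilon>] assms(6,7) by auto
    from measure_Un_le[OF this] show ?thesis by (simp add: Diff_Int space)
  qed
  show ?thesis
    by (rule tendsto_sandwich[OF _ _ tendsto_const union_bound_tendsto])
      (simp_all add: union_bound always_eventually)
qed

lemma LIMSEQ_of_approx_bounds:
  fixes x :: "nat \<Rightarrow> real"
  assumes "\<epsilon>\<^sub>0 > 0"
    and approx: "\<And>\<epsilon>. 0 < \<epsilon> \<Longrightarrow> \<epsilon> \<le> \<epsilon>\<^sub>0 \<Longrightarrow> \<exists>u. u \<longlonglongrightarrow> 0 \<and> (\<forall>i. \<bar>x i - l\<bar> \<le> \<epsilon> * K + u i)"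
  shows "x \<longlonglongrightarrow> l"
proof (rule LIMSEQ_I)
  fix \<eta> :: real assume "\<eta> > 0"
  define \<epsilon> where "\<epsilon> = min \<epsilon>\<^sub>0 (\<eta> / (2 * (\<bar>K\<bar> + 1)))"
  have "0 < \<epsilon>" "\<epsilon> \<le> \<epsilon>\<^sub>0" using \<open>\<epsilon>\<^sub>0 > 0\<close> \<open>\<eta> > 0\<close> by (auto simp: \<epsilon>_def)
  then obtain u where "u \<longlonglongrightarrow> 0" and u: "\<And>i. \<bar>x i - l\<bar> \<le> \<epsilon> * K + u i" using approx by blast
  then obtain i0 where i0: "\<forall>i\<ge>i0. \<bar>u i\<bar> < \<eta> / 2"
    using LIMSEQ_D[of u 0 "\<eta> / 2"] \<open>\<eta> > 0\<close> by auto
  have "\<epsilon> * K \<le> \<epsilon> * \<bar>K\<bar>" using \<open>0 < \<epsilon>\<close> by (intro mult_left_mono) auto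
  also have "\<dots> \<le> \<eta> / (2 * (\<bar>K\<bar> + 1)) * \<bar>K\<bar>"
    by (intro mult_right_mono) (auto simp: \<epsilon>_def)
  also have "\<dots> \<le> \<eta> / 2" using \<open>\<eta> > 0\<close> by (simp add: field_simps)
  finally have "\<epsilon> * K \<le> \<eta> / 2" .
  show "\<exists>i0. \<forall>i\<ge>i0. norm (x i - l) < \<eta>"
  proof (intro exI allI impI)
    fix i assume "i \<ge> i0"
    then have "u i < \<eta> / 2" using i0 by (auto simp: abs_less_iff)
    then show "norm (x i - l) < \<eta>" using u[of i] \<open>\<epsilon> * K \<le> \<eta> / 2\<close> by simp
  qed
qed

lemma fdiv_tendsto_if_M_conv:
  fixes F F' :: "real \<Rightarrow> real"
  assumes F_cont: "continuous_on {0<..} F"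
    and subgrad: "pos_subgradient F F'"
    and growth: "\<And>x. x > 0 \<Longrightarrow> \<bar>F x\<bar> \<le> a + b * x" "\<And>x. x > 0 \<Longrightarrow> \<bar>x * F' x\<bar> \<le> a + b * x"
    and ab: "a \<ge> 0" "b \<ge> 0"
    and equiv: "\<And>i. equivalent_probs P Q (Ps i) (Qs i)"
    and convP: "M_conv Ps P" and convQ: "M_conv Qs Q"
  shows "(\<lambda>i. fdiv F (Ps i) (Qs i)) \<longlonglongrightarrow> fdiv F P Q"
proof (rule LIMSEQ_of_approx_bounds[where \<epsilon>\<^sub>0 = "1/2"])
  fix \<epsilon> :: real assume "0 < \<epsilon>" "\<epsilon> \<le> 1/2"
  define B where "B i = space P - (rn_close_set P (Ps i) \<epsilon> \<inter> rn_close_set Q (Qs i) \<epsilon>)" for i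
  note PQ = equivalent_probs.probs(1,2)[OF equiv] equivalent_probs.sets(1)[OF equiv]
    equivalent_probs.acs(9,2,1,10)[OF equiv]
  have "(\<lambda>i. measure P (B i)) \<longlonglongrightarrow> 0" "(\<lambda>i. measure Q (B i)) \<longlonglongrightarrow> 0"
    unfolding B_def
    using M_conv_measure_compl_inter_tendsto_0[OF convP convQ PQ(1,2,1,3) refl PQ(4,5) \<open>0 < \<epsilon>\<close>]
      M_conv_measure_compl_inter_tendsto_0[OF convP convQ PQ(1,2,2,3,3,6,7) \<open>0 < \<epsilon>\<close>] .
  then have "(\<lambda>i. 2 * a * measure P (B i) + 2 * b * measure Q (B i)) \<longlonglongrightarrow> 0"
    by (intro tendsto_add_zero tendsto_mult_right_zero)
  moreover have "\<bar>fdiv F (Ps i) (Qs i) - fdiv F P Q\<bar>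
      \<le> \<epsilon> * (27 * a + 103 * b) + (2 * a * measure P (B i) + 2 * b * measure Q (B i))" for i
    using equivalent_probs.fdiv_dist_le[OF equiv F_cont subgrad growth ab _ \<open>\<epsilon> \<le> 1/2\<close>] \<open>0 < \<epsilon>\<close>
    unfolding B_def by (simp only: add.assoc)
  ultimately show "\<exists>u. u \<longlonglongrightarrow> 0 \<and>
      (\<forall>i. \<bar>fdiv F (Ps i) (Qs i) - fdiv F P Q\<bar> \<le> \<epsilon> * (27 * a + 103 * b) + u i)"
    by blast
qed simp

theorem mainTheorem14:
  fixes F :: "real \<Rightarrow> real"
    and P Q :: "'a measure"
    and Ps Qs :: "nat \<Rightarrow> 'a measure"
  assumes convex: "convex_on {0<..} F"
    and diff: "\<forall>x>0. F differentiable (at x)"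
    and cont_deriv: "continuous_on {0<..} (deriv F)"
    and F1: "F 1 = 0"
    and lim0: "\<exists>L. (F \<longlongrightarrow> L) (at_right 0)"
    and liminf: "\<exists>L. (deriv F \<longlongrightarrow> L) at_top"
    and prob: "\<forall>M \<in> {P, Q} \<union> range Ps \<union> range Qs. prob_space M"
    and same_sets: "\<forall>M \<in> {P, Q} \<union> range Ps \<union> range Qs. sets M = sets P"
    and mutual_ac: "\<forall>M \<in> {P, Q} \<union> range Ps \<union> range Qs.
                      \<forall>N \<in> {P, Q} \<union> range Ps \<union> range Qs. absolutely_continuous M N"
    and convP: "M_conv Ps P"
    and convQ: "M_conv Qs Q"
  shows "(\<lambda>i. fdiv F (Ps i) (Qs i)) \<longlonglongrightarrow> fdiv F P Q"
proof -
  have subgrad: "pos_subgradient F (deriv F)"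
    by (rule convex_on_pos_subgradient_deriv[OF convex diff])
  obtain a b where "a \<ge> 0" "b \<ge> 0" "\<And>x. x > 0 \<Longrightarrow> \<bar>F x\<bar> \<le> a + b * x"
    "\<And>x. x > 0 \<Longrightarrow> \<bar>x * deriv F x\<bar> \<le> a + b * x"
    using lim0 liminf subgradient_linear_growth[OF subgrad F1] by metis
  moreover have "continuous_on {0<..} F"
    using diff by (intro continuous_at_imp_continuous_on) (auto intro: differentiable_imp_continuous_within)
  moreover have "equivalent_probs P Q (Ps i) (Qs i)" for i
    using prob same_sets mutual_ac by unfold_locales auto
  ultimately show ?thesis
    using fdiv_tendsto_if_M_conv[OF _ subgrad _ _ _ _ _ convP convQ] by blast
qed

end
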